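(* Let $n\ge1$, let $\Omega\subset\mathbb{R}^n$ be a bounded open set and $\mu$ a finite (signed) Radon measure on $\Omega$. Assume there exist $\theta\in(0,1)$ and sequences $r_k,\varepsilon_k$ with $0<\sqrt n\,r_k\le\varepsilon_k\downarrow0$ such that $$\liminf_{k\to\infty}\int_{\Omega^{\varepsilon_k}}\frac{|\mu(Q_{x,r_k})|^\theta}{r_k^n}\,dx<\infty.$$ Then there exist (at most countably many) points $x^j\in\Omega$ and $m_j\in\mathbb{R}\setminus\{0\}$ such that $\mu=\sum_j m_j\delta_{x^j}$ and $$\sum_j|m_j|^\theta\le\liminf_{k\to\infty}\int_{\Omega^{\varepsilon_k}}\frac{|\mu(Q_{x,r_k})|^\theta}{r_k^n}\,dx.$$
   Context: $Q_{x,r}:=x+[0,r)^n$ for $x\in\mathbb{R}^n$, $r>0$. $\Omega^\varepsilon:=\{x\in\Omega:\operatorname{dist}(x,\mathbb{R}^n\setminus\Omega)>\varepsilon\}$, so that $Q_{x,r}\subset\Omega$ whenever $x\in\Omega^\varepsilon$ and $\sqrt n\,r\le\varepsilon$. *)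

theory Defs
  imports "HOL-Analysis.Analysis"
begin

definition cube :: "'a::euclidean_space \<Rightarrow> real \<Rightarrow> 'a set" where
  "cube x r = {y. \<forall>b\<in>Basis. x \<bullet> b \<le> y \<bullet> b \<and> y \<bullet> b < x \<bullet> b + r}"

definition inner_set :: "'a::euclidean_space set \<Rightarrow> real \<Rightarrow> 'a set" where
  "inner_set \<Omega> \<epsilon> = {x \<in> \<Omega>. infdist x (UNIV - \<Omega>) > \<epsilon>}"

text \<open>Finite signed measure given by its Jordan decomposition mu = M1 - M2.\<close>
definition signed_meas :: "'a measure \<Rightarrow> 'a measure \<Rightarrow> 'a set \<Rightarrow> real" where
  "signed_meas M1 M2 A = measure M1 A - measure M2 A"

end

theory Submission
  imports Defs
begin

text \<open>
  The set of corners x with y \<in> Q_{x,r} is itself a cube of volume r^n, so by Tonelli the integral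
  of \<mu>(Q_{x,r}) over the r-neighbourhood of a set K is r^n \<mu>(K), up to the mass of a slightly larger
  neighbourhood. Where |\<mu>(Q_{x,r})| < \<eta> one has |\<mu>(Q_{x,r})|^\<theta> \<ge> \<eta>^(\<theta>-1) |\<mu>(Q_{x,r})|, and
  \<eta>^(\<theta>-1) \<rightarrow> \<infinity> as \<eta> \<rightarrow> 0 because \<theta> < 1. Once finitely many atoms are removed, small cubes
  carry small mass; hence a compact atom-free set of positive measure would force infinite
  energy, and \<mu> is purely atomic. Conversely, for small r a cube containing an atom z has
  measure close to \<mu>{z}, the cubes containing distinct atoms are disjoint, and those containing
  z fill volume r^n, which bounds \<Sum> |\<mu>{z}|^\<theta> by the liminf of the energy.
\<close>

section \<open>Cubes\<close>

lemma dist_less_in_cube: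
  fixes x :: "'a::euclidean_space"
  assumes "y \<in> cube x s" "z \<in> cube x s"
  shows "dist y z < sqrt DIM('a) * s"
proof -
  have "\<bar>(y - z) \<bullet> b\<bar> < s" if "b \<in> Basis" for b
  proof -
    have "x \<bullet> b \<le> y \<bullet> b \<and> y \<bullet> b < x \<bullet> b + s" "x \<bullet> b \<le> z \<bullet> b \<and> z \<bullet> b < x \<bullet> b + s"
      using assms that by (auto simp: cube_def)
    then show ?thesis
      by (simp add: inner_diff_left abs_less_iff)
  qed
  then have "infnorm (y - z) < s"
    by (simp add: infnorm_Max)
  then have "sqrt DIM('a) * infnorm (y - z) < sqrt DIM('a) * s"
    by simp
  then show ?thesis
    unfolding dist_norm using norm_le_infnorm[of "y - z"] by linarith
qed

lemma in_cube_self: "0 < s \<Longrightarrow> x \<in> cube x s"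
  by (auto simp: cube_def)

lemma dist_less_in_cube_base:
  fixes x :: "'a::euclidean_space"
  assumes "y \<in> cube x s"
  shows "dist x y < sqrt DIM('a) * s"
proof -
  have "0 < s"
    using assms nonempty_Basis by (fastforce simp: cube_def)
  then show ?thesis
    using dist_less_in_cube[OF in_cube_self assms] by simp
qed

lemma cubes_containing_disjoint:
  fixes e e' :: "'a::euclidean_space"
  assumes "sqrt DIM('a) * s \<le> dist e e'"
  shows "{x. e \<in> cube x s} \<inter> {x. e' \<in> cube x s} = {}"
  using dist_less_in_cube[of e _ s e'] assms by fastforce

lemma sets_cube [measurable]: "cube x s \<in> sets borel"
  unfolding cube_def by measurable

lemma cube_subset_inner_set:
  fixes x :: "'a::euclidean_space"
  assumes "x \<in> inner_set \<Omega> e" "sqrt DIM('a) * s \<le> e"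
  shows "cube x s \<subseteq> \<Omega>"
proof
  fix y assume y: "y \<in> cube x s"
  show "y \<in> \<Omega>"
  proof (rule ccontr)
    assume "y \<notin> \<Omega>"
    then have "infdist x (UNIV - \<Omega>) \<le> dist x y"
      by (intro infdist_le) auto
    with assms dist_less_in_cube_base[OF y] show False
      by (auto simp: inner_set_def)
  qed
qed

lemma inner_set_near_compact:
  fixes K :: "'a::euclidean_space set"
  assumes "compact K" "K \<subseteq> \<Omega>" "open \<Omega>" "\<Omega> \<noteq> UNIV"
  obtains d where "0 < d" "\<And>x y e. y \<in> K \<Longrightarrow> 0 \<le> e \<Longrightarrow> dist x y + e < d \<Longrightarrow> x \<in> inner_set \<Omega> e"
proof -
  obtain d where "0 < d" and d: "\<And>y z. y \<in> K \<Longrightarrow> z \<in> UNIV - \<Omega> \<Longrightarrow> d \<le> dist y z"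
    using separate_compact_closed[of K "UNIV - \<Omega>"] assms by blast
  have "x \<in> inner_set \<Omega> e" if "y \<in> K" "0 \<le> e" "dist x y + e < d" for x y e
  proof -
    have "e < dist x z" if "z \<in> UNIV - \<Omega>" for z
      using d[OF \<open>y \<in> K\<close> that] dist_triangle[of y z x] \<open>dist x y + e < d\<close>
      by (simp add: dist_commute)
    then have "x \<in> \<Omega>"
      using \<open>0 \<le> e\<close> by force
    moreover have "d - dist x y \<le> infdist x (UNIV - \<Omega>)"
    proof -
      have "d - dist x y \<le> dist x z" if "z \<in> UNIV - \<Omega>" for z
        using d[OF \<open>y \<in> K\<close> that] dist_triangle[of y z x] by (simp add: dist_commute)
      moreover have ne: "UNIV - \<Omega> \<noteq> {}"
        using assms(4) by auto
      ultimately show ?thesis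
        unfolding infdist_notempty[OF ne] by (intro cINF_greatest[OF ne])
    qed
    ultimately show ?thesis
      using \<open>dist x y + e < d\<close> by (simp add: inner_set_def)
  qed
  with \<open>0 < d\<close> show ?thesis
    using that by blast
qed

lemma emeasure_lborel_cubes_containing:
  fixes y :: "'a::euclidean_space"
  assumes "0 < s"
  shows "emeasure lborel {x. y \<in> cube x s} = s ^ DIM('a)"
proof -
  let ?l = "y - s *\<^sub>R One"
  have inner: "box ?l y \<subseteq> {x. y \<in> cube x s}" and outer: "{x. y \<in> cube x s} \<subseteq> cbox ?l y"
    by (fastforce simp: cube_def mem_box inner_diff_left)+
  have "{x. y \<in> cube x s} \<in> sets lborel"
    unfolding cube_def by measurable
  then have "emeasure lborel (box ?l y) \<le> emeasure lborel {x. y \<in> cube x s}"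
    "emeasure lborel {x. y \<in> cube x s} \<le> emeasure lborel (cbox ?l y)"
    using emeasure_mono[OF inner] emeasure_mono[OF outer] by auto
  moreover have "emeasure lborel (box ?l y) = s ^ DIM('a)" "emeasure lborel (cbox ?l y) = s ^ DIM('a)"
    using assms by (simp_all add: emeasure_lborel_box_eq emeasure_lborel_cbox_eq inner_diff_left prod_constant)
  ultimately show ?thesis
    by simp
qed

lemma pred_in_cube [measurable]:
  assumes [measurable]: "f \<in> borel_measurable M" "g \<in> borel_measurable M"
  shows "Measurable.pred M (\<lambda>p. g p \<in> cube (f p) s)"
  unfolding cube_def by measurable

lemma borel_measurable_measure_cube:
  fixes B :: "'a::euclidean_space measure"
  assumes "sets B = sets borel" "finite_measure B"
  shows "(\<lambda>x. emeasure B (cube x s)) \<in> borel_measurable borel"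
    and "(\<lambda>x. measure B (cube x s)) \<in> borel_measurable borel"
proof -
  interpret finite_measure B by fact
  note [measurable_cong] = assms(1)
  have "Measurable.pred (borel \<Otimes>\<^sub>M B) (\<lambda>p. snd p \<in> cube (fst p) s)"
    by measurable
  then have "{p. snd p \<in> cube (fst p) s} \<in> sets (borel \<Otimes>\<^sub>M B)"
    by (simp add: pred_def space_pair_measure sets_eq_imp_space_eq[OF assms(1)])
  from measurable_emeasure_Pair[OF this]
  show "(\<lambda>x. emeasure B (cube x s)) \<in> borel_measurable borel"
    by (simp add: vimage_def)
  then show "(\<lambda>x. measure B (cube x s)) \<in> borel_measurable borel"
    by (simp add: measure_def)
qed

lemma nn_integral_measure_cube_eq:
  fixes B :: "'a::euclidean_space measure"
  assumes "sets B = sets borel" "finite_measure B" "G \<in> sets borel"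
  shows "(\<integral>\<^sup>+ x \<in> G. emeasure B (cube x s) \<partial>lborel)
       = (\<integral>\<^sup>+ y. emeasure lborel (G \<inter> {x. y \<in> cube x s}) \<partial>B)"
proof -
  interpret B: finite_measure B by fact
  interpret P: pair_sigma_finite lborel B
    by unfold_locales
  note [measurable_cong] = assms(1) and [measurable] = assms(3)
  let ?f = "\<lambda>p. indicator G (fst p) * indicator (cube (fst p) s) (snd p) :: ennreal"
  have "?f \<in> borel_measurable (lborel \<Otimes>\<^sub>M B)"
    by measurable
  from P.Fubini[OF this]
  have "(\<integral>\<^sup>+ x. \<integral>\<^sup>+ y. ?f (x, y) \<partial>B \<partial>lborel) = (\<integral>\<^sup>+ y. \<integral>\<^sup>+ x. ?f (x, y) \<partial>lborel \<partial>B)" ..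
  moreover have "(\<integral>\<^sup>+ y. ?f (x, y) \<partial>B) = indicator G x * emeasure B (cube x s)" for x
    by (simp add: nn_integral_cmult_indicator)
  moreover have "(\<integral>\<^sup>+ x. ?f (x, y) \<partial>lborel) = emeasure lborel (G \<inter> {x. y \<in> cube x s})" for y
  proof -
    have "(\<integral>\<^sup>+ x. ?f (x, y) \<partial>lborel) = (\<integral>\<^sup>+ x. indicator (G \<inter> {x. y \<in> cube x s}) x \<partial>lborel)"
      by (intro nn_integral_cong) (simp split: split_indicator)
    also have "\<dots> = emeasure lborel (G \<inter> {x. y \<in> cube x s})"
      by (intro nn_integral_indicator) measurable
    finally show ?thesis .
  qed
  ultimately show ?thesis
    by (simp add: mult.commute)
qed

lemma nn_integral_measure_cube_ge:
  fixes B :: "'a::euclidean_space measure"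
  assumes "sets B = sets borel" "finite_measure B" "G \<in> sets borel" "K \<in> sets borel" "0 < s"
    and "\<And>x y. y \<in> K \<Longrightarrow> y \<in> cube x s \<Longrightarrow> x \<in> G"
  shows "ennreal (s ^ DIM('a)) * emeasure B K \<le> (\<integral>\<^sup>+ x \<in> G. emeasure B (cube x s) \<partial>lborel)"
proof -
  have "ennreal (s ^ DIM('a)) * emeasure B K = (\<integral>\<^sup>+ y. ennreal (s ^ DIM('a)) * indicator K y \<partial>B)"
    using assms(1,4) by (simp add: nn_integral_cmult_indicator)
  also have "\<dots> \<le> (\<integral>\<^sup>+ y. emeasure lborel (G \<inter> {x. y \<in> cube x s}) \<partial>B)"
  proof (intro nn_integral_mono)
    fix y
    show "ennreal (s ^ DIM('a)) * indicator K y \<le> emeasure lborel (G \<inter> {x. y \<in> cube x s})"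
    proof (cases "y \<in> K")
      case True
      then have "G \<inter> {x. y \<in> cube x s} = {x. y \<in> cube x s}"
        using assms(6) by auto
      with True show ?thesis
        using emeasure_lborel_cubes_containing[OF \<open>0 < s\<close>, of y] by simp
    qed simp
  qed
  also have "\<dots> = (\<integral>\<^sup>+ x \<in> G. emeasure B (cube x s) \<partial>lborel)"
    using nn_integral_measure_cube_eq[OF assms(1-3)] by simp
  finally show ?thesis .
qed

lemma nn_integral_measure_cube_le:
  fixes B :: "'a::euclidean_space measure"
  assumes "sets B = sets borel" "finite_measure B" "G \<in> sets borel" "H \<in> sets borel" "0 < s"
    and "\<And>x. x \<in> G \<Longrightarrow> cube x s \<subseteq> H"
  shows "(\<integral>\<^sup>+ x \<in> G. emeasure B (cube x s) \<partial>lborel) \<le> ennreal (s ^ DIM('a)) * emeasure B H"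
proof -
  have "(\<integral>\<^sup>+ x \<in> G. emeasure B (cube x s) \<partial>lborel)
      = (\<integral>\<^sup>+ y. emeasure lborel (G \<inter> {x. y \<in> cube x s}) \<partial>B)"
    using nn_integral_measure_cube_eq[OF assms(1-3)] by simp
  also have "\<dots> \<le> (\<integral>\<^sup>+ y. ennreal (s ^ DIM('a)) * indicator H y \<partial>B)"
  proof (intro nn_integral_mono)
    fix y
    show "emeasure lborel (G \<inter> {x. y \<in> cube x s}) \<le> ennreal (s ^ DIM('a)) * indicator H y"
    proof (cases "y \<in> H")
      case True
      have "emeasure lborel (G \<inter> {x. y \<in> cube x s}) \<le> emeasure lborel {x. y \<in> cube x s}"
        by (intro emeasure_mono) (auto simp: cube_def)
      with True show ?thesis
        using emeasure_lborel_cubes_containing[OF \<open>0 < s\<close>, of y] by simp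
    next
      case False
      then have "G \<inter> {x. y \<in> cube x s} = {}"
        using assms(6) by auto
      then show ?thesis
        by simp
    qed
  qed
  also have "\<dots> = ennreal (s ^ DIM('a)) * emeasure B H"
    using assms(1,4) by (simp add: nn_integral_cmult_indicator)
  finally show ?thesis .
qed

lemma powr_minus_one_mult_le_powr:
  fixes t \<eta> \<theta> :: real
  assumes "0 \<le> t" "t < \<eta>" "\<theta> < 1"
  shows "\<eta> powr (\<theta> - 1) * t \<le> t powr \<theta>"
proof (cases "t = 0")
  case False
  then have "\<eta> powr (\<theta> - 1) \<le> t powr (\<theta> - 1)"
    using assms by (intro powr_mono2') auto
  then have "\<eta> powr (\<theta> - 1) * t \<le> t powr (\<theta> - 1) * t"
    using assms(1) by (rule mult_right_mono)
  also have "\<dots> = t powr \<theta>"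
    using assms(1) False by (simp add: powr_diff)
  finally show ?thesis .
qed simp

lemma set_nn_integral_powr_ge:
  fixes f :: "'a \<Rightarrow> real"
  assumes "G \<in> sets M" "f \<in> borel_measurable M" "\<theta> < 1" "0 < c"
    and "\<And>x. x \<in> G \<Longrightarrow> x \<in> I \<and> 0 \<le> f x \<and> f x < \<eta>"
  shows "ennreal (\<eta> powr (\<theta> - 1) / c) * (\<integral>\<^sup>+ x \<in> G. ennreal (f x) \<partial>M)
    \<le> (\<integral>\<^sup>+ x \<in> I. ennreal (f x powr \<theta> / c) \<partial>M)"
proof -
  have "ennreal (\<eta> powr (\<theta> - 1) / c) * (\<integral>\<^sup>+ x \<in> G. ennreal (f x) \<partial>M)
      = (\<integral>\<^sup>+ x. ennreal (\<eta> powr (\<theta> - 1) / c) * (ennreal (f x) * indicator G x) \<partial>M)"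
    using assms(1,2) by (intro nn_integral_cmult[symmetric]) (auto intro: borel_measurable_indicator)
  also have "\<dots> \<le> (\<integral>\<^sup>+ x \<in> I. ennreal (f x powr \<theta> / c) \<partial>M)"
  proof (intro nn_integral_mono)
    fix x
    show "ennreal (\<eta> powr (\<theta> - 1) / c) * (ennreal (f x) * indicator G x) \<le> ennreal (f x powr \<theta> / c) * indicator I x"
    proof (cases "x \<in> G")
      case True
      with assms(5) have "x \<in> I" "0 \<le> f x" "f x < \<eta>"
        by auto
      then have "\<eta> powr (\<theta> - 1) / c * f x \<le> f x powr \<theta> / c"
        using powr_minus_one_mult_le_powr[of "f x" \<eta> \<theta>] \<open>\<theta> < 1\<close> \<open>0 < c\<close>
        by (simp add: divide_right_mono)
      with True \<open>x \<in> I\<close> \<open>0 \<le> f x\<close> \<open>0 < c\<close> show ?thesis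
        by (simp add: ennreal_mult'[symmetric] ennreal_leI)
    qed simp
  qed
  finally show ?thesis .
qed

lemma nn_integral_count_space_has_sum:
  fixes f :: "'a \<Rightarrow> real"
  assumes "(f has_sum s) C" "\<And>x. x \<in> C \<Longrightarrow> 0 \<le> f x"
  shows "(\<integral>\<^sup>+ x. ennreal (f x) \<partial>count_space C) = ennreal s"
proof -
  have "f summable_on C"
    using assms(1) by (auto simp: summable_on_def)
  then have summable: "Infinite_Set_Sum.abs_summable_on f C"
    using abs_summable_equivalent summable_on_iff_abs_summable_on_real by blast
  have "(\<integral>\<^sup>+ x. ennreal (f x) \<partial>count_space C) = ennreal (infsetsum f C)"
    using summable assms(2) by (rule nn_integral_conv_infsetsum)
  also have "infsetsum f C = s"
    using infsetsum_infsum[OF summable] infsumI[OF assms(1)] by simp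
  finally show ?thesis .
qed

lemma has_sum_of_nn_integral_count_space:
  fixes f :: "'a \<Rightarrow> real"
  assumes "(\<integral>\<^sup>+ x. ennreal (f x) \<partial>count_space C) = ennreal s" "0 \<le> s"
    and "\<And>x. x \<in> C \<Longrightarrow> 0 \<le> f x"
  shows "(f has_sum s) C"
proof -
  have "integrable (count_space C) f"
    using assms by (intro integrableI_nonneg) (auto simp: AE_count_space)
  then have summable: "Infinite_Set_Sum.abs_summable_on f C"
    by (simp add: abs_summable_on_def)
  have "ennreal (infsetsum f C) = ennreal s"
    using nn_integral_conv_infsetsum[OF summable assms(3)] assms(1) by simp
  then have "infsetsum f C = s"
    using assms(2,3) infsetsum_nonneg[of C f] by simp
  then have "infsum f C = s"
    using infsetsum_infsum[OF summable] by simp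
  moreover have "f summable_on C"
    using summable abs_summable_equivalent summable_on_iff_abs_summable_on_real by blast
  ultimately show ?thesis
    using has_sum_infsum by blast
qed

lemma finite_pairwise_separated:
  fixes E :: "'a::metric_space set"
  assumes "finite E"
  obtains d where "0 < d" "\<And>x y. x \<in> E \<Longrightarrow> y \<in> E \<Longrightarrow> x \<noteq> y \<Longrightarrow> d \<le> dist x y"
proof -
  have "\<exists>d>0. \<forall>y\<in>E. y \<noteq> x \<longrightarrow> d \<le> dist x y" for x
    using finite_set_avoid[OF assms] .
  then obtain d where d: "\<And>x. 0 < d x" "\<And>x y. y \<in> E \<Longrightarrow> y \<noteq> x \<Longrightarrow> d x \<le> dist x y"
    by metis
  define d' where "d' = Min (insert 1 (d ` E))"
  have "0 < d'"
    using assms d(1) by (simp add: d'_def)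
  moreover have "d' \<le> dist x y" if "x \<in> E" "y \<in> E" "x \<noteq> y" for x y
  proof -
    have "d' \<le> d x"
      unfolding d'_def using assms that(1) by (intro Min_le) auto
    with d(2)[of y x] that show ?thesis
      by simp
  qed
  ultimately show ?thesis
    using that by blast
qed

lemma nn_integral_ge_sum_disjoint:
  fixes c :: "'b \<Rightarrow> ennreal"
  assumes "finite E" "\<And>e. e \<in> E \<Longrightarrow> C e \<in> sets M"
    and "\<And>e e'. e \<in> E \<Longrightarrow> e' \<in> E \<Longrightarrow> e \<noteq> e' \<Longrightarrow> C e \<inter> C e' = {}"
    and "\<And>e x. e \<in> E \<Longrightarrow> x \<in> C e \<Longrightarrow> c e \<le> f x"
  shows "(\<Sum>e\<in>E. c e * emeasure M (C e)) \<le> (\<integral>\<^sup>+ x. f x \<partial>M)"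
proof -
  have "(\<Sum>e\<in>E. c e * emeasure M (C e)) = (\<Sum>e\<in>E. \<integral>\<^sup>+ x. c e * indicator (C e) x \<partial>M)"
    using assms(2) by (simp add: nn_integral_cmult_indicator)
  also have "\<dots> = (\<integral>\<^sup>+ x. (\<Sum>e\<in>E. c e * indicator (C e) x) \<partial>M)"
    using assms(2) by (intro nn_integral_sum[symmetric]) auto
  also have "\<dots> \<le> (\<integral>\<^sup>+ x. f x \<partial>M)"
  proof (intro nn_integral_mono)
    fix x
    show "(\<Sum>e\<in>E. c e * indicator (C e) x) \<le> f x"
    proof (cases "\<exists>e\<in>E. x \<in> C e")
      case True
      then obtain e where e: "e \<in> E" "x \<in> C e"
        by blast
      then have "(\<Sum>e'\<in>E. c e' * indicator (C e') x) = c e"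
        using assms(1,3) by (subst sum.remove[of _ e]) (auto intro!: sum.neutral)
      with e assms(4) show ?thesis
        by simp
    qed (simp add: sum.neutral)
  qed
  finally show ?thesis .
qed

context finite_measure
begin

lemma measure_sublevel_diff_less:
  fixes g :: "'a \<Rightarrow> real"
  assumes [measurable]: "g \<in> borel_measurable M" "E \<in> sets M"
    and less: "measure M ({y \<in> space M. g y \<le> 0} - E) < a"
  obtains \<delta> where "0 < \<delta>" "measure M ({y \<in> space M. g y < \<delta>} - E) < a"
proof -
  define A where "A j = {y \<in> space M. g y < 1 / Suc j} - E" for j :: nat
  have "decseq A"
  proof (rule decseq_SucI)
    fix j
    have "1 / real (Suc (Suc j)) \<le> 1 / real (Suc j)"
      by (intro divide_left_mono) auto
    then show "A (Suc j) \<subseteq> A j"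
      by (auto simp: A_def simp del: of_nat_Suc)
  qed
  moreover have "range A \<subseteq> sets M"
    unfolding A_def by auto
  moreover have "(\<Inter>j. A j) = {y \<in> space M. g y \<le> 0} - E"
  proof (intro equalityI subsetI)
    fix y assume y: "y \<in> (\<Inter>j. A j)"
    have "g y \<le> 0"
    proof (rule ccontr)
      assume "\<not> g y \<le> 0"
      then obtain j :: nat where "1 / Suc j < g y"
        by (meson not_le nat_approx_posE)
      moreover have "y \<in> A j"
        using y by blast
      ultimately show False
        by (auto simp: A_def simp del: of_nat_Suc)
    qed
    with y show "y \<in> {y \<in> space M. g y \<le> 0} - E"
      by (auto simp: A_def)
  qed (auto simp: A_def intro: le_less_trans)
  ultimately have "(\<lambda>j. measure M (A j)) \<longlonglongrightarrow> measure M ({y \<in> space M. g y \<le> 0} - E)"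
    by (metis finite_Lim_measure_decseq)
  from order_tendstoD(2)[OF this less] obtain j where "measure M (A j) < a"
    by (auto simp: eventually_sequentially)
  then show ?thesis
    by (intro that[of "1 / Suc j"]) (auto simp: A_def)
qed

lemma has_sum_measure_singletons:
  assumes "countable C" "\<And>x. x \<in> C \<Longrightarrow> {x} \<in> sets M"
  shows "((\<lambda>x. measure M {x}) has_sum measure M C) C"
proof (rule has_sum_of_nn_integral_count_space)
  have "emeasure M C = (\<integral>\<^sup>+ x. emeasure M {x} \<partial>count_space C)"
    using assms by (intro emeasure_countable_singleton)
  then show "(\<integral>\<^sup>+ x. ennreal (measure M {x}) \<partial>count_space C) = ennreal (measure M C)"
    by (simp add: emeasure_eq_measure)
qed auto

lemma finite_subset_measure_diff_less:
  assumes "countable D" "\<And>x. x \<in> D \<Longrightarrow> {x} \<in> sets M" "0 < e"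
  obtains F where "finite F" "F \<subseteq> D" "measure M (D - F) < e"
proof -
  obtain F where F: "finite F" "F \<subseteq> D" "dist (\<Sum>x\<in>F. measure M {x}) (measure M D) \<le> e / 2"
    using has_sum_finite_approximation[OF has_sum_measure_singletons[OF assms(1,2)], of "e / 2"] assms(3)
    by auto
  have "D \<in> sets M"
    using assms(2,1) by (rule sets.countable)
  moreover have "F \<in> sets M"
    using F(2) assms(2) countable_finite[OF F(1)] by (metis sets.countable subsetD)
  ultimately have "measure M (D - F) = measure M D - measure M F"
    using F(2) by (rule finite_measure_Diff)
  also have "measure M F = (\<Sum>x\<in>F. measure M {x})"
    using F(1,2) assms(2) by (intro finite_measure_eq_sum_singleton) auto
  finally have "measure M (D - F) < e"
    using abs_le_D2[OF F(3)[unfolded dist_real_def]] assms(3) by linarith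
  with F(1,2) show ?thesis
    by (rule that)
qed

end

lemma measure_ball_diff_less:
  fixes M :: "'a::metric_space measure"
  assumes "finite_measure M" "sets M = sets borel" "E \<in> sets borel" "measure M ({z} - E) < a"
  obtains \<delta> where "0 < \<delta>" "measure M (ball z \<delta> - E) < a"
proof -
  interpret finite_measure M by fact
  have space: "space M = UNIV"
    using sets_eq_imp_space_eq[OF assms(2)] by simp
  have "(\<lambda>y. dist z y) \<in> borel_measurable borel"
    by (intro borel_measurable_continuous_onI continuous_intros)
  then have meas: "(\<lambda>y. dist z y) \<in> borel_measurable M"
    by (simp add: measurable_cong_sets[OF assms(2) refl])
  have E: "E \<in> sets M"
    using assms(2,3) by simp
  have level_sets: "{y \<in> space M. dist z y \<le> 0} = {z}" "\<And>\<delta>. {y \<in> space M. dist z y < \<delta>} = ball z \<delta>"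
    by (auto simp: space)
  with assms(4) have "measure M ({y \<in> space M. dist z y \<le> 0} - E) < a"
    by simp
  with meas E obtain \<delta> where "0 < \<delta>" "measure M ({y \<in> space M. dist z y < \<delta>} - E) < a"
    by (rule measure_sublevel_diff_less)
  with level_sets(2) show ?thesis
    using that by simp
qed

lemma measure_thickening_less:
  fixes M :: "'a::metric_space measure"
  assumes "finite_measure M" "sets M = sets borel" "closed K" "K \<noteq> {}" "measure M K < a"
  obtains \<delta> where "0 < \<delta>" "measure M {y. infdist y K < \<delta>} < a"
proof -
  interpret finite_measure M by fact
  have space: "space M = UNIV"
    using sets_eq_imp_space_eq[OF assms(2)] by simp
  have "(\<lambda>y. infdist y K) \<in> borel_measurable borel"
    by (intro borel_measurable_continuous_onI continuous_intros)
  then have meas: "(\<lambda>y. infdist y K) \<in> borel_measurable M"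
    by (simp add: measurable_cong_sets[OF assms(2) refl])
  have "{y \<in> space M. infdist y K \<le> 0} - {} = K"
  proof -
    have "infdist y K \<le> 0 \<longleftrightarrow> y \<in> K" for y
      using in_closed_iff_infdist_zero[OF assms(3,4), of y] infdist_nonneg[of y K] by auto
    then show ?thesis
      by (auto simp: space)
  qed
  then have "measure M ({y \<in> space M. infdist y K \<le> 0} - {}) < a"
    using assms(5) by simp
  with meas sets.empty_sets obtain \<delta>
    where "0 < \<delta>" "measure M ({y \<in> space M. infdist y K < \<delta>} - {}) < a"
    by (rule measure_sublevel_diff_less)
  then show ?thesis
    using that by (simp add: space)
qed

lemma measure_diff_uniformly_less_near_compact:
  fixes M :: "'a::metric_space measure"
  assumes "finite_measure M" "sets M = sets borel" "compact T"
    and "E \<in> sets borel" and small: "\<And>z. measure M ({z} - E) < a"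
  obtains \<rho> where "0 < \<rho>" "\<And>p A. p \<in> T \<Longrightarrow> A \<subseteq> ball p \<rho> \<Longrightarrow> measure M (A - E) < a"
proof -
  interpret finite_measure M by fact
  have "\<exists>\<delta>>0. measure M (ball z \<delta> - E) < a" for z
    using measure_ball_diff_less[OF assms(1,2,4) small[of z]] by blast
  then obtain d where d: "\<And>z. 0 < d z" "\<And>z. measure M (ball z (d z) - E) < a"
    by metis
  obtain C where C: "finite C" "T \<subseteq> (\<Union>z\<in>C. ball z (d z / 2))"
    by (rule compactE_image[OF \<open>compact T\<close>, of _ "\<lambda>z. ball z (d z / 2)"]) (use d(1) in auto)
  define \<rho> where "\<rho> = Min (insert 1 ((\<lambda>z. d z / 2) ` C))"
  have "0 < \<rho>"
    using C(1) d(1) by (simp add: \<rho>_def)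
  moreover have "measure M (A - E) < a" if "p \<in> T" "A \<subseteq> ball p \<rho>" for p A
  proof -
    obtain z where z: "z \<in> C" "dist z p < d z / 2"
      using C(2) \<open>p \<in> T\<close> by auto
    have "\<rho> \<le> d z / 2"
      unfolding \<rho>_def using C(1) z(1) by (intro Min_le) auto
    have "A \<subseteq> ball z (d z)"
    proof
      fix w assume "w \<in> A"
      then have "dist p w < \<rho>"
        using \<open>A \<subseteq> ball p \<rho>\<close> by auto
      then show "w \<in> ball z (d z)"
        using z(2) \<open>\<rho> \<le> d z / 2\<close> dist_triangle[of z w p] by simp
    qed
    then have "A - E \<subseteq> ball z (d z) - E"
      by blast
    then have "measure M (A - E) \<le> measure M (ball z (d z) - E)"
      using assms(2,4) by (intro finite_measure_mono) auto
    with d(2)[of z] show ?thesis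
      by linarith
  qed
  ultimately show ?thesis
    using that by blast
qed

lemma measure_small_cubes_diff_less:
  fixes M :: "'a::euclidean_space measure"
  assumes "finite_measure M" "sets M = sets borel"
    and "bounded \<Omega>" "\<Omega> \<in> sets borel" "emeasure M (- \<Omega>) = 0"
    and "E \<in> sets borel" and small: "\<And>z. measure M ({z} - E) < a"
  obtains \<rho> where "0 < \<rho>" "\<And>x s. sqrt DIM('a) * s < \<rho> \<Longrightarrow> measure M (cube x s - E) < a"
proof -
  interpret finite_measure M by fact
  have "compact (closure \<Omega>)"
    using assms(3) by (simp add: compact_closure)
  then obtain \<rho> where "0 < \<rho>" and \<rho>: "\<And>p A. p \<in> closure \<Omega> \<Longrightarrow> A \<subseteq> ball p \<rho> \<Longrightarrow> measure M (A - E) < a"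
    by (rule measure_diff_uniformly_less_near_compact[OF assms(1,2) _ assms(6) small]) blast
  have "measure M (cube x s - E) < a" if "sqrt DIM('a) * s < \<rho>" for x s
  proof (cases "cube x s \<inter> \<Omega> = {}")
    case True
    then have "measure M (cube x s - E) \<le> measure M (- \<Omega>)"
      using assms(2,4) by (intro finite_measure_mono) auto
    also have "\<dots> = 0"
      using assms(5) by (simp add: measure_def)
    finally show ?thesis
      using small[of x] measure_nonneg[of M "{x} - E"] by linarith
  next
    case False
    then obtain p where "p \<in> cube x s" "p \<in> closure \<Omega>"
      using closure_subset by blast
    have "cube x s \<subseteq> ball p \<rho>"
      using dist_less_in_cube[OF \<open>p \<in> cube x s\<close>] that by fastforce
    with \<open>p \<in> closure \<Omega>\<close> show ?thesis
      by (rule \<rho>)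
  qed
  with \<open>0 < \<rho>\<close> show ?thesis
    using that by blast
qed

section \<open>Signed differences of finite Borel measures\<close>

locale finite_borel_pair =
  B1: finite_measure B1 + B2: finite_measure B2
  for B1 B2 :: "'a::euclidean_space measure" +
  assumes sets_B1 [measurable_cong]: "sets B1 = sets borel"
    and sets_B2 [measurable_cong]: "sets B2 = sets borel"
begin

abbreviation \<mu> :: "'a set \<Rightarrow> real" where
  "\<mu> \<equiv> signed_meas B1 B2"

lemma borel_measurable_signed_meas_cube [measurable]: "(\<lambda>x. \<mu> (cube x s)) \<in> borel_measurable borel"
  unfolding signed_meas_def
  by (intro borel_measurable_diff borel_measurable_measure_cube(2) sets_B1 sets_B2
      B1.finite_measure_axioms B2.finite_measure_axioms)

lemma nn_integral_abs_signed_meas_cube_ge: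
  assumes "G \<in> sets borel" "K \<in> sets borel" "H \<in> sets borel" "0 < s"
    and "\<And>x y. y \<in> K \<Longrightarrow> y \<in> cube x s \<Longrightarrow> x \<in> G" and "\<And>x. x \<in> G \<Longrightarrow> cube x s \<subseteq> H"
  shows "s ^ DIM('a) * (measure B1 K - measure B2 H) \<le> (\<integral>\<^sup>+ x \<in> G. ennreal \<bar>\<mu> (cube x s)\<bar> \<partial>lborel)"
proof -
  let ?I = "\<integral>\<^sup>+ x \<in> G. ennreal \<bar>\<mu> (cube x s)\<bar> \<partial>lborel"
  have "ennreal (s ^ DIM('a)) * emeasure B1 K \<le> (\<integral>\<^sup>+ x \<in> G. emeasure B1 (cube x s) \<partial>lborel)"
    by (rule nn_integral_measure_cube_ge[OF sets_B1 B1.finite_measure_axioms assms(1,2,4,5)])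
  also have "\<dots> \<le> (\<integral>\<^sup>+ x \<in> G. ennreal \<bar>\<mu> (cube x s)\<bar> + emeasure B2 (cube x s) \<partial>lborel)"
  proof (intro nn_integral_mono)
    fix x
    have "measure B1 (cube x s) \<le> \<bar>\<mu> (cube x s)\<bar> + measure B2 (cube x s)"
      by (simp add: signed_meas_def)
    then show "emeasure B1 (cube x s) * indicator G x
        \<le> (ennreal \<bar>\<mu> (cube x s)\<bar> + emeasure B2 (cube x s)) * indicator G x"
      by (simp add: B1.emeasure_eq_measure B2.emeasure_eq_measure mult_right_mono flip: ennreal_plus)
  qed
  also have "\<dots> = ?I + (\<integral>\<^sup>+ x \<in> G. emeasure B2 (cube x s) \<partial>lborel)"
    using borel_measurable_measure_cube(1)[OF sets_B2 B2.finite_measure_axioms] assms(1)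
    by (simp add: distrib_right nn_integral_add)
  also have "\<dots> \<le> ?I + ennreal (s ^ DIM('a)) * emeasure B2 H"
    using nn_integral_measure_cube_le[OF sets_B2 B2.finite_measure_axioms assms(1,3,4,6)]
    by (rule add_left_mono)
  finally have "ennreal (s ^ DIM('a) * measure B1 K) \<le> ennreal (s ^ DIM('a) * measure B2 H) + ?I"
    using \<open>0 < s\<close> by (simp add: B1.emeasure_eq_measure B2.emeasure_eq_measure ennreal_mult' add.commute)
  then show ?thesis
    using \<open>0 < s\<close> by (simp add: right_diff_distrib ennreal_minus_le_iff flip: ennreal_minus)
qed

lemma nn_integral_abs_signed_meas_cube_thickening_ge:
  assumes "compact K" "0 < s"
  shows "ennreal (s ^ DIM('a) * (measure B1 K - measure B2 {y. infdist y K < 2 * (sqrt DIM('a) * s)}))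
    \<le> (\<integral>\<^sup>+ x \<in> {x. infdist x K < sqrt DIM('a) * s}. ennreal \<bar>\<mu> (cube x s)\<bar> \<partial>lborel)"
proof (rule nn_integral_abs_signed_meas_cube_ge[OF _ _ _ \<open>0 < s\<close>])
  have "open {x. infdist x K < t}" for t
    by (rule open_Collect_less) (auto intro: continuous_intros)
  then show "{x. infdist x K < sqrt DIM('a) * s} \<in> sets borel" "K \<in> sets borel"
    "{y. infdist y K < 2 * (sqrt DIM('a) * s)} \<in> sets borel"
    using \<open>compact K\<close> by (auto intro: borel_compact)
next
  fix x y assume "y \<in> K" "y \<in> cube x s"
  then show "x \<in> {x. infdist x K < sqrt DIM('a) * s}"
    using infdist_le[OF \<open>y \<in> K\<close>, of x] dist_less_in_cube_base[of y x s] by simp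
next
  fix x assume x: "x \<in> {x. infdist x K < sqrt DIM('a) * s}"
  show "cube x s \<subseteq> {y. infdist y K < 2 * (sqrt DIM('a) * s)}"
  proof
    fix w assume "w \<in> cube x s"
    then have "dist w x < sqrt DIM('a) * s"
      using dist_less_in_cube_base[of w x s] by (simp add: dist_commute)
    with x infdist_triangle[of w K x] show "w \<in> {y. infdist y K < 2 * (sqrt DIM('a) * s)}"
      by simp
  qed
qed

lemma nn_integral_powr_signed_meas_cube_ge:
  assumes "compact K" "0 < s" "\<theta> < 1"
    and near: "\<And>x. infdist x K < sqrt DIM('a) * s \<Longrightarrow> x \<in> I \<and> \<bar>\<mu> (cube x s)\<bar> < \<eta>"
  shows "ennreal (\<eta> powr (\<theta> - 1) * (measure B1 K - measure B2 {y. infdist y K < 2 * (sqrt DIM('a) * s)}))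
    \<le> (\<integral>\<^sup>+ x \<in> I. ennreal (\<bar>\<mu> (cube x s)\<bar> powr \<theta> / s ^ DIM('a)) \<partial>lborel)"
proof -
  let ?G = "{x. infdist x K < sqrt DIM('a) * s}"
  let ?X = "measure B1 K - measure B2 {y. infdist y K < 2 * (sqrt DIM('a) * s)}"
  have "open ?G"
    by (rule open_Collect_less) (auto intro: continuous_intros)
  have "ennreal (\<eta> powr (\<theta> - 1) * ?X) = ennreal (\<eta> powr (\<theta> - 1) / s ^ DIM('a)) * ennreal (s ^ DIM('a) * ?X)"
    using \<open>0 < s\<close> by (simp add: ennreal_mult'[symmetric])
  also have "\<dots> \<le> ennreal (\<eta> powr (\<theta> - 1) / s ^ DIM('a)) * (\<integral>\<^sup>+ x \<in> ?G. ennreal \<bar>\<mu> (cube x s)\<bar> \<partial>lborel)"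
    using nn_integral_abs_signed_meas_cube_thickening_ge[OF \<open>compact K\<close> \<open>0 < s\<close>] by (rule mult_left_mono) simp
  also have "\<dots> \<le> (\<integral>\<^sup>+ x \<in> I. ennreal (\<bar>\<mu> (cube x s)\<bar> powr \<theta> / s ^ DIM('a)) \<partial>lborel)"
  proof (rule set_nn_integral_powr_ge[OF _ _ \<open>\<theta> < 1\<close>])
    show "?G \<in> sets lborel" "(\<lambda>x. \<bar>\<mu> (cube x s)\<bar>) \<in> borel_measurable lborel"
      using \<open>open ?G\<close> by auto
  qed (use near \<open>0 < s\<close> in auto)
  finally show ?thesis .
qed

lemma abs_signed_meas_ge_atom:
  assumes "A \<in> sets borel" "z \<in> A"
  shows "\<bar>\<mu> {z}\<bar> - (measure B1 (A - {z}) + measure B2 (A - {z})) \<le> \<bar>\<mu> A\<bar>"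
proof -
  have "measure B1 (A - {z}) = measure B1 A - measure B1 {z}"
    "measure B2 (A - {z}) = measure B2 A - measure B2 {z}"
    using assms by (simp_all add: B1.finite_measure_Diff B2.finite_measure_Diff)
  then show ?thesis
    using measure_nonneg[of B1 "A - {z}"] measure_nonneg[of B2 "A - {z}"]
    by (simp add: signed_meas_def)
qed

lemma abs_signed_meas_small_cube_ge_atom:
  assumes "q < 1"
  obtains \<rho> where "0 < \<rho>"
    "\<And>x s. z \<in> cube x s \<Longrightarrow> sqrt DIM('a) * s < \<rho> \<Longrightarrow> q * \<bar>\<mu> {z}\<bar> \<le> \<bar>\<mu> (cube x s)\<bar>"
proof (cases "\<mu> {z} = 0")
  case True
  then show ?thesis
    using that[of 1] by simp
next
  case False
  define a where "a = (1 - q) * \<bar>\<mu> {z}\<bar> / 2"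
  have "0 < a"
    using False assms by (simp add: a_def)
  obtain \<delta>1 where \<delta>1: "0 < \<delta>1" "measure B1 (ball z \<delta>1 - {z}) < a"
    by (rule measure_ball_diff_less[OF B1.finite_measure_axioms sets_B1, of "{z}" z a])
      (use \<open>0 < a\<close> in simp_all)
  obtain \<delta>2 where \<delta>2: "0 < \<delta>2" "measure B2 (ball z \<delta>2 - {z}) < a"
    by (rule measure_ball_diff_less[OF B2.finite_measure_axioms sets_B2, of "{z}" z a])
      (use \<open>0 < a\<close> in simp_all)
  show ?thesis
  proof (rule that[of "min \<delta>1 \<delta>2"])
    fix x s assume "z \<in> cube x s" "sqrt DIM('a) * s < min \<delta>1 \<delta>2"
    have "dist z w < min \<delta>1 \<delta>2" if "w \<in> cube x s" for w
      using dist_less_in_cube[OF \<open>z \<in> cube x s\<close> that] \<open>sqrt DIM('a) * s < min \<delta>1 \<delta>2\<close> by linarith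
    then have "cube x s - {z} \<subseteq> ball z \<delta>1 - {z}" "cube x s - {z} \<subseteq> ball z \<delta>2 - {z}"
      by auto
    then have "measure B1 (cube x s - {z}) \<le> measure B1 (ball z \<delta>1 - {z})"
      "measure B2 (cube x s - {z}) \<le> measure B2 (ball z \<delta>2 - {z})"
      by (simp_all add: B1.finite_measure_mono B2.finite_measure_mono sets_B1 sets_B2)
    with \<delta>1(2) \<delta>2(2) have "measure B1 (cube x s - {z}) < a" "measure B2 (cube x s - {z}) < a"
      by simp_all
    moreover have "\<bar>\<mu> {z}\<bar> - 2 * a = q * \<bar>\<mu> {z}\<bar>"
      unfolding a_def by (simp add: field_simps)
    ultimately show "q * \<bar>\<mu> {z}\<bar> \<le> \<bar>\<mu> (cube x s)\<bar>"
      using abs_signed_meas_ge_atom[OF sets_cube \<open>z \<in> cube x s\<close>] by linarith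
  qed (use \<delta>1 \<delta>2 in simp)
qed

lemma exists_compact_subset_signed_meas_pos:
  assumes "A \<in> sets borel" "0 < \<mu> A"
  obtains K where "K \<subseteq> A" "compact K" "0 < \<mu> K"
proof -
  have "emeasure B1 A = (SUP K \<in> {K. K \<subseteq> A \<and> compact K}. emeasure B1 K)"
    using assms(1) by (intro inner_regular[OF sets_B1]) auto
  moreover have "ennreal (measure B2 A) < emeasure B1 A"
    using assms(2) measure_nonneg[of B2 A]
    by (simp add: signed_meas_def B1.emeasure_eq_measure ennreal_less_iff)
  ultimately obtain K where K: "K \<subseteq> A" "compact K" "ennreal (measure B2 A) < emeasure B1 K"
    by (auto simp: less_SUP_iff)
  moreover have "measure B2 K \<le> measure B2 A"
    using K(1,2) assms(1) by (intro B2.finite_measure_mono) (auto intro: borel_compact)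
  ultimately show ?thesis
    using that by (auto simp: signed_meas_def B1.emeasure_eq_measure ennreal_less_iff)
qed

lemma finite_subset_atoms_diff_less:
  assumes "countable D" "\<And>z. z \<notin> D \<Longrightarrow> measure B1 {z} = 0 \<and> measure B2 {z} = 0" "0 < \<eta>"
  obtains E where "finite E" "E \<subseteq> D" "\<forall>z. measure B1 ({z} - E) < \<eta> \<and> measure B2 ({z} - E) < \<eta>"
proof -
  obtain F1 where F1: "finite F1" "F1 \<subseteq> D" "measure B1 (D - F1) < \<eta>"
    by (rule B1.finite_subset_measure_diff_less[OF \<open>countable D\<close> _ \<open>0 < \<eta>\<close>]) (simp add: sets_B1)
  obtain F2 where F2: "finite F2" "F2 \<subseteq> D" "measure B2 (D - F2) < \<eta>"
    by (rule B2.finite_subset_measure_diff_less[OF \<open>countable D\<close> _ \<open>0 < \<eta>\<close>]) (simp add: sets_B2)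
  define E where "E = F1 \<union> F2"
  have "D \<in> sets borel"
    using \<open>countable D\<close> by (rule sets.countable[rotated]) simp
  then have "D - F1 \<in> sets borel" "D - F2 \<in> sets borel"
    using finite_imp_closed[OF F1(1)] finite_imp_closed[OF F2(1)] by auto
  have "measure B1 ({z} - E) < \<eta> \<and> measure B2 ({z} - E) < \<eta>" for z
  proof (cases "z \<in> D")
    case True
    then have "{z} - E \<subseteq> D - F1" "{z} - E \<subseteq> D - F2"
      by (auto simp: E_def)
    then have "measure B1 ({z} - E) \<le> measure B1 (D - F1)" "measure B2 ({z} - E) \<le> measure B2 (D - F2)"
      using \<open>D - F1 \<in> sets borel\<close> \<open>D - F2 \<in> sets borel\<close>
      by (simp_all add: B1.finite_measure_mono B2.finite_measure_mono sets_B1 sets_B2)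
    with F1(3) F2(3) show ?thesis
      by linarith
  next
    case False
    have "measure B1 ({z} - E) \<le> measure B1 {z}" "measure B2 ({z} - E) \<le> measure B2 {z}"
      by (simp_all add: B1.finite_measure_mono B2.finite_measure_mono sets_B1 sets_B2)
    with assms(2)[OF False] \<open>0 < \<eta>\<close> show ?thesis
      by simp
  qed
  moreover have "finite E" "E \<subseteq> D"
    using F1 F2 by (auto simp: E_def)
  ultimately show ?thesis
    using that by blast
qed

lemma nn_integral_powr_signed_meas_cube_ge_atoms:
  assumes "finite E" "0 < s" "0 \<le> q" "0 \<le> \<theta>"
    and near: "\<And>x e. e \<in> E \<Longrightarrow> e \<in> cube x s \<Longrightarrow> x \<in> I \<and> q * \<bar>\<mu> {e}\<bar> \<le> \<bar>\<mu> (cube x s)\<bar>"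
    and apart: "\<And>e e'. e \<in> E \<Longrightarrow> e' \<in> E \<Longrightarrow> e \<noteq> e' \<Longrightarrow> sqrt DIM('a) * s \<le> dist e e'"
  shows "ennreal (q powr \<theta> * (\<Sum>e\<in>E. \<bar>\<mu> {e}\<bar> powr \<theta>))
    \<le> (\<integral>\<^sup>+ x \<in> I. ennreal (\<bar>\<mu> (cube x s)\<bar> powr \<theta> / s ^ DIM('a)) \<partial>lborel)"
proof -
  define c where "c e = ennreal ((q * \<bar>\<mu> {e}\<bar>) powr \<theta> / s ^ DIM('a))" for e :: 'a
  have "c e * emeasure lborel {x. e \<in> cube x s} = ennreal ((q * \<bar>\<mu> {e}\<bar>) powr \<theta>)" for e
    using \<open>0 < s\<close> by (simp add: c_def emeasure_lborel_cubes_containing ennreal_mult'[symmetric])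
  then have "ennreal (q powr \<theta> * (\<Sum>e\<in>E. \<bar>\<mu> {e}\<bar> powr \<theta>)) = (\<Sum>e\<in>E. c e * emeasure lborel {x. e \<in> cube x s})"
    using \<open>0 \<le> q\<close> by (simp add: powr_mult sum_distrib_left)
  also have "\<dots> \<le> (\<integral>\<^sup>+ x \<in> I. ennreal (\<bar>\<mu> (cube x s)\<bar> powr \<theta> / s ^ DIM('a)) \<partial>lborel)"
  proof (rule nn_integral_ge_sum_disjoint[OF \<open>finite E\<close>])
    show "{x. e \<in> cube x s} \<in> sets lborel" for e
      unfolding cube_def by measurable
    show "{x. e \<in> cube x s} \<inter> {x. e' \<in> cube x s} = {}" if "e \<in> E" "e' \<in> E" "e \<noteq> e'" for e e'
      using apart[OF that] by (rule cubes_containing_disjoint)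
  next
    fix e x assume "e \<in> E" "x \<in> {x. e \<in> cube x s}"
    with near have "x \<in> I" "q * \<bar>\<mu> {e}\<bar> \<le> \<bar>\<mu> (cube x s)\<bar>"
      by auto
    moreover have "(q * \<bar>\<mu> {e}\<bar>) powr \<theta> \<le> \<bar>\<mu> (cube x s)\<bar> powr \<theta>"
      using \<open>q * \<bar>\<mu> {e}\<bar> \<le> \<bar>\<mu> (cube x s)\<bar>\<close> \<open>0 \<le> q\<close> \<open>0 \<le> \<theta>\<close> by (intro powr_mono2) simp_all
    ultimately show "c e \<le> ennreal (\<bar>\<mu> (cube x s)\<bar> powr \<theta> / s ^ DIM('a)) * indicator I x"
      using \<open>0 < s\<close> by (simp add: c_def divide_right_mono ennreal_leI)
  qed
  finally show ?thesis .
qed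

end

section \<open>The cube energy\<close>

text \<open>
  The measures M1, M2 of the theorem live on the trace \<sigma>-algebra of \<Omega>; the locale works instead
  with their push-forwards B1, B2 to all of \<real>^n, which vanish off \<Omega> and measure every cube.
\<close>

locale cube_energy = finite_borel_pair B1 B2
  for B1 B2 :: "'a::euclidean_space measure" +
  fixes \<Omega> :: "'a set" and \<theta> :: real and r \<epsilon> :: "nat \<Rightarrow> real"
  assumes open_\<Omega>: "open \<Omega>" and bounded_\<Omega>: "bounded \<Omega>"
    and null_B1: "emeasure B1 (- \<Omega>) = 0" and null_B2: "emeasure B2 (- \<Omega>) = 0"
    and \<theta>_pos: "0 < \<theta>" and \<theta>_less_1: "\<theta> < 1"
    and r_pos: "\<And>k. 0 < r k" and r_le_\<epsilon>: "\<And>k. sqrt DIM('a) * r k \<le> \<epsilon> k"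
    and \<epsilon>_tendsto_0: "\<epsilon> \<longlonglongrightarrow> 0"
begin

definition energy :: "nat \<Rightarrow> ennreal" where
  "energy k = (\<integral>\<^sup>+ x \<in> inner_set \<Omega> (\<epsilon> k). ennreal (\<bar>\<mu> (cube x (r k))\<bar> powr \<theta> / r k ^ DIM('a)) \<partial>lborel)"

lemma \<Omega>_neq_UNIV: "\<Omega> \<noteq> UNIV"
  using bounded_\<Omega> not_bounded_UNIV by auto

lemma eventually_diam_less:
  assumes "0 < d"
  shows "\<forall>\<^sub>F k in sequentially. sqrt DIM('a) * r k < d"
  using order_tendstoD(2)[OF \<epsilon>_tendsto_0 assms]
proof (rule eventually_mono)
  fix k assume "\<epsilon> k < d"
  with r_le_\<epsilon>[of k] show "sqrt DIM('a) * r k < d"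
    by linarith
qed

lemma eventually_near_compact_subset_inner_set:
  assumes "compact K" "K \<subseteq> \<Omega>"
  shows "\<forall>\<^sub>F k in sequentially. \<forall>x y. y \<in> K \<longrightarrow> dist x y < sqrt DIM('a) * r k \<longrightarrow> x \<in> inner_set \<Omega> (\<epsilon> k)"
proof -
  obtain d where "0 < d" and d: "\<And>x y e. y \<in> K \<Longrightarrow> 0 \<le> e \<Longrightarrow> dist x y + e < d \<Longrightarrow> x \<in> inner_set \<Omega> e"
    using inner_set_near_compact[OF assms open_\<Omega> \<Omega>_neq_UNIV] by blast
  have "\<forall>\<^sub>F k in sequentially. \<epsilon> k < d / 2"
    using order_tendstoD(2)[OF \<epsilon>_tendsto_0, of "d / 2"] \<open>0 < d\<close> by simp
  then show ?thesis
  proof (rule eventually_mono, intro allI impI)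
    fix k x y assume "\<epsilon> k < d / 2" "y \<in> K" "dist x y < sqrt DIM('a) * r k"
    moreover have "0 < sqrt DIM('a) * r k"
      using r_pos[of k] by simp
    ultimately show "x \<in> inner_set \<Omega> (\<epsilon> k)"
      using r_le_\<epsilon>[of k] by (intro d[OF \<open>y \<in> K\<close>]) simp_all
  qed
qed

lemma eventually_small_cubes_near_compact:
  assumes "compact K" "K \<noteq> {}" "finite E" "E \<inter> K = {}"
    and small: "\<And>z. measure B1 ({z} - E) < \<eta> / 2" "\<And>z. measure B2 ({z} - E) < \<eta> / 2"
  shows "\<forall>\<^sub>F k in sequentially. \<forall>x. infdist x K < sqrt DIM('a) * r k \<longrightarrow> \<bar>\<mu> (cube x (r k))\<bar> < \<eta>"
proof -
  obtain d where "0 < d" and d: "\<And>y w. y \<in> K \<Longrightarrow> w \<in> E \<Longrightarrow> d \<le> dist y w"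
    using separate_compact_closed[OF \<open>compact K\<close> finite_imp_closed[OF \<open>finite E\<close>]] assms(4) by blast
  have sets: "\<Omega> \<in> sets borel" "E \<in> sets borel"
    using open_\<Omega> finite_imp_closed[OF \<open>finite E\<close>] by auto
  obtain \<rho>1 where "0 < \<rho>1" and \<rho>1: "\<And>x s. sqrt DIM('a) * s < \<rho>1 \<Longrightarrow> measure B1 (cube x s - E) < \<eta> / 2"
    using measure_small_cubes_diff_less[OF B1.finite_measure_axioms sets_B1 bounded_\<Omega> sets(1) null_B1
        sets(2) small(1)] by blast
  obtain \<rho>2 where "0 < \<rho>2" and \<rho>2: "\<And>x s. sqrt DIM('a) * s < \<rho>2 \<Longrightarrow> measure B2 (cube x s - E) < \<eta> / 2"
    using measure_small_cubes_diff_less[OF B2.finite_measure_axioms sets_B2 bounded_\<Omega> sets(1) null_B2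
        sets(2) small(2)] by blast
  have "0 < min (d / 2) (min \<rho>1 \<rho>2)"
    using \<open>0 < d\<close> \<open>0 < \<rho>1\<close> \<open>0 < \<rho>2\<close> by simp
  from eventually_diam_less[OF this] show ?thesis
  proof (rule eventually_mono, intro allI impI)
    fix k x
    let ?\<rho> = "sqrt DIM('a) * r k"
    assume "?\<rho> < min (d / 2) (min \<rho>1 \<rho>2)" "infdist x K < ?\<rho>"
    obtain y where "y \<in> K" "infdist x K = dist x y"
      using infdist_attains_inf[OF compact_imp_closed[OF \<open>compact K\<close>] \<open>K \<noteq> {}\<close>] by metis
    have "w \<notin> E" if "w \<in> cube x (r k)" for w
    proof
      assume "w \<in> E"
      have "dist y w < 2 * ?\<rho>"
        using dist_less_in_cube_base[OF that] \<open>infdist x K < ?\<rho>\<close> \<open>infdist x K = dist x y\<close>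
          dist_triangle[of y w x] by (simp add: dist_commute)
      with d[OF \<open>y \<in> K\<close> \<open>w \<in> E\<close>] \<open>?\<rho> < min (d / 2) (min \<rho>1 \<rho>2)\<close> show False
        by simp
    qed
    then have "cube x (r k) - E = cube x (r k)"
      by blast
    then have "measure B1 (cube x (r k)) < \<eta> / 2" "measure B2 (cube x (r k)) < \<eta> / 2"
      using \<rho>1[of "r k" x] \<rho>2[of "r k" x] \<open>?\<rho> < min (d / 2) (min \<rho>1 \<rho>2)\<close> by simp_all
    then show "\<bar>\<mu> (cube x (r k))\<bar> < \<eta>"
      using measure_nonneg[of B1 "cube x (r k)"] measure_nonneg[of B2 "cube x (r k)"]
      unfolding signed_meas_def abs_less_iff by linarith
  qed
qed

lemma energy_ge_diffuse_eventually:
  assumes "compact K" "K \<subseteq> \<Omega>" "finite E" "E \<inter> K = {}"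
    and small: "\<And>z. measure B1 ({z} - E) < \<eta> / 2" "\<And>z. measure B2 ({z} - E) < \<eta> / 2"
    and "0 < \<mu> K"
  shows "\<forall>\<^sub>F k in sequentially. ennreal (\<eta> powr (\<theta> - 1) * (\<mu> K / 2)) \<le> energy k"
proof -
  have "K \<noteq> {}"
    using \<open>0 < \<mu> K\<close> by (auto simp: signed_meas_def)
  obtain \<delta> where "0 < \<delta>" and \<delta>: "measure B2 {y. infdist y K < \<delta>} < measure B2 K + \<mu> K / 2"
    using measure_thickening_less[OF B2.finite_measure_axioms sets_B2 compact_imp_closed[OF \<open>compact K\<close>]
        \<open>K \<noteq> {}\<close>, of "measure B2 K + \<mu> K / 2"] \<open>0 < \<mu> K\<close> by auto
  have "0 < \<delta> / 2"
    using \<open>0 < \<delta>\<close> by simp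
  from eventually_diam_less[OF this] eventually_near_compact_subset_inner_set[OF assms(1,2)]
    eventually_small_cubes_near_compact[OF assms(1) \<open>K \<noteq> {}\<close> assms(3,4) small]
  show ?thesis
  proof eventually_elim
    case (elim k)
    let ?H = "{y. infdist y K < 2 * (sqrt DIM('a) * r k)}"
    have "open {y. infdist y K < t}" for t
      by (rule open_Collect_less) (auto intro: continuous_intros)
    then have "measure B2 ?H \<le> measure B2 {y. infdist y K < \<delta>}"
      using elim(1) by (intro B2.finite_measure_mono) (auto simp: sets_B2)
    with \<delta> have "measure B2 ?H < measure B2 K + \<mu> K / 2"
      by linarith
    then have "\<mu> K / 2 \<le> measure B1 K - measure B2 ?H"
      by (simp add: signed_meas_def field_simps)
    then have "ennreal (\<eta> powr (\<theta> - 1) * (\<mu> K / 2))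
        \<le> ennreal (\<eta> powr (\<theta> - 1) * (measure B1 K - measure B2 ?H))"
      by (intro ennreal_leI mult_left_mono) simp_all
    also have "\<dots> \<le> energy k"
    proof (unfold energy_def, rule nn_integral_powr_signed_meas_cube_ge[OF \<open>compact K\<close> r_pos \<theta>_less_1])
      fix x assume "infdist x K < sqrt DIM('a) * r k"
      moreover obtain y where "y \<in> K" "infdist x K = dist x y"
        using infdist_attains_inf[OF compact_imp_closed[OF \<open>compact K\<close>] \<open>K \<noteq> {}\<close>] by metis
      ultimately show "x \<in> inner_set \<Omega> (\<epsilon> k) \<and> \<bar>\<mu> (cube x (r k))\<bar> < \<eta>"
        using elim(2,3) by auto
    qed
    finally show ?case .
  qed
qed

lemma energy_ge_atoms_eventually:
  assumes "finite E" "E \<subseteq> \<Omega>" "0 \<le> q" "q < 1"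
  shows "\<forall>\<^sub>F k in sequentially. ennreal (q powr \<theta> * (\<Sum>e\<in>E. \<bar>\<mu> {e}\<bar> powr \<theta>)) \<le> energy k"
proof -
  have "\<exists>\<rho>>0. \<forall>x s. e \<in> cube x s \<longrightarrow> sqrt DIM('a) * s < \<rho> \<longrightarrow> q * \<bar>\<mu> {e}\<bar> \<le> \<bar>\<mu> (cube x s)\<bar>" for e
    using abs_signed_meas_small_cube_ge_atom[OF \<open>q < 1\<close>, of e] by metis
  then obtain \<rho> where \<rho>: "\<And>e. 0 < \<rho> e"
    "\<And>e x s. e \<in> cube x s \<Longrightarrow> sqrt DIM('a) * s < \<rho> e \<Longrightarrow> q * \<bar>\<mu> {e}\<bar> \<le> \<bar>\<mu> (cube x s)\<bar>"
    by metis
  obtain d where d: "0 < d" "\<And>e e'. e \<in> E \<Longrightarrow> e' \<in> E \<Longrightarrow> e \<noteq> e' \<Longrightarrow> d \<le> dist e e'"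
    using finite_pairwise_separated[OF \<open>finite E\<close>] by blast
  define m where "m = Min (insert d (\<rho> ` E))"
  have "m \<le> d"
    unfolding m_def using \<open>finite E\<close> by (intro Min_le) auto
  then have m: "0 < m" "m \<le> d" "\<And>e. e \<in> E \<Longrightarrow> m \<le> \<rho> e"
    using \<open>finite E\<close> \<open>0 < d\<close> \<rho>(1) by (auto simp: m_def)
  from eventually_diam_less[OF m(1)]
    eventually_near_compact_subset_inner_set[OF finite_imp_compact[OF \<open>finite E\<close>] \<open>E \<subseteq> \<Omega>\<close>]
  show ?thesis
  proof eventually_elim
    case (elim k)
    show ?case
      unfolding energy_def
    proof (rule nn_integral_powr_signed_meas_cube_ge_atoms[OF \<open>finite E\<close> r_pos \<open>0 \<le> q\<close> less_imp_le[OF \<theta>_pos]])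
      fix x e assume "e \<in> E" "e \<in> cube x (r k)"
      moreover have "sqrt DIM('a) * r k < \<rho> e"
        using elim(1) m(3)[OF \<open>e \<in> E\<close>] by linarith
      ultimately show "x \<in> inner_set \<Omega> (\<epsilon> k) \<and> q * \<bar>\<mu> {e}\<bar> \<le> \<bar>\<mu> (cube x (r k))\<bar>"
        using elim(2) dist_less_in_cube_base[of e x "r k"] by (auto intro: \<rho>(2))
    next
      fix e e' assume "e \<in> E" "e' \<in> E" "e \<noteq> e'"
      with d(2) elim(1) m(2) show "sqrt DIM('a) * r k \<le> dist e e'"
        by fastforce
    qed
  qed
qed

lemma sum_atoms_le_liminf_energy:
  assumes "finite E" "E \<subseteq> \<Omega>"
  shows "ennreal (\<Sum>e\<in>E. \<bar>\<mu> {e}\<bar> powr \<theta>) \<le> liminf energy"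
proof (cases "liminf energy")
  case (real L)
  have "t * (\<Sum>e\<in>E. \<bar>\<mu> {e}\<bar> powr \<theta>) \<le> L" if "0 < t" "t < 1" for t
  proof -
    have "(t powr (1 / \<theta>)) powr \<theta> = t" "0 \<le> t powr (1 / \<theta>)" "t powr (1 / \<theta>) < 1"
      using that \<theta>_pos powr_less_mono2[of "1 / \<theta>" t 1] by (simp_all add: powr_powr)
    then have "\<forall>\<^sub>F k in sequentially. ennreal (t * (\<Sum>e\<in>E. \<bar>\<mu> {e}\<bar> powr \<theta>)) \<le> energy k"
      using energy_ge_atoms_eventually[OF assms, of "t powr (1 / \<theta>)"] by simp
    then have "ennreal (t * (\<Sum>e\<in>E. \<bar>\<mu> {e}\<bar> powr \<theta>)) \<le> ennreal L"
      unfolding real(2)[symmetric] by (rule Liminf_bounded)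
    then show ?thesis
      using real by (simp add: ennreal_le_iff)
  qed
  then have "(\<Sum>e\<in>E. \<bar>\<mu> {e}\<bar> powr \<theta>) \<le> L"
    by (rule field_le_mult_one_interval)
  with real show ?thesis
    by (simp add: ennreal_leI)
qed simp

lemma liminf_energy_eq_top_if_diffuse:
  assumes "compact K" "K \<subseteq> \<Omega>" "0 < \<mu> K"
    and "countable D" "K \<inter> D = {}" "\<And>z. z \<notin> D \<Longrightarrow> measure B1 {z} = 0 \<and> measure B2 {z} = 0"
  shows "liminf energy = \<infinity>"
proof -
  have lower: "ennreal (T * (\<mu> K / 2)) \<le> liminf energy" if "0 < T" for T
  proof -
    define \<eta> where "\<eta> = T powr (1 / (\<theta> - 1))"
    have "0 < \<eta>" "\<eta> powr (\<theta> - 1) = T"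
      using that \<theta>_less_1 by (simp_all add: \<eta>_def powr_powr)
    from finite_subset_atoms_diff_less[OF assms(4,6) half_gt_zero[OF \<open>0 < \<eta>\<close>]]
    obtain E where E: "finite E" "E \<subseteq> D"
      and small: "\<forall>z. measure B1 ({z} - E) < \<eta> / 2 \<and> measure B2 ({z} - E) < \<eta> / 2" .
    have "E \<inter> K = {}"
      using E(2) assms(5) by auto
    then have "\<forall>\<^sub>F k in sequentially. ennreal (\<eta> powr (\<theta> - 1) * (\<mu> K / 2)) \<le> energy k"
      using energy_ge_diffuse_eventually[OF assms(1,2) E(1) _ _ _ assms(3)] small by blast
    then show ?thesis
      unfolding \<open>\<eta> powr (\<theta> - 1) = T\<close> by (rule Liminf_bounded)
  qed
  show ?thesis
  proof (cases "liminf energy")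
    case (real L)
    have "2 * (L + 1) / \<mu> K * (\<mu> K / 2) = L + 1"
      using \<open>0 < \<mu> K\<close> by simp
    with lower[of "2 * (L + 1) / \<mu> K"] real \<open>0 < \<mu> K\<close> have "ennreal (L + 1) \<le> ennreal L"
      by simp
    with real show ?thesis
      by (simp add: ennreal_le_iff)
  qed simp
qed

lemma signed_meas_inter_\<Omega>:
  assumes "A \<in> sets borel"
  shows "\<mu> (A \<inter> \<Omega>) = \<mu> A"
proof -
  have "- \<Omega> \<in> null_sets B1" "- \<Omega> \<in> null_sets B2"
    using open_\<Omega> null_B1 null_B2 by (auto simp: sets_B1 sets_B2)
  then have "measure B1 (A - (- \<Omega>)) = measure B1 A" "measure B2 (A - (- \<Omega>)) = measure B2 A"
    using assms by (simp_all only: measure_Diff_null_set sets_B1 sets_B2)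
  moreover have "A - (- \<Omega>) = A \<inter> \<Omega>"
    by blast
  ultimately show ?thesis
    by (simp add: signed_meas_def)
qed

lemma signed_meas_nonpos_if_diffuse:
  assumes "liminf energy < \<infinity>" "A \<in> sets borel"
    and "countable D" "A \<inter> D = {}" "\<And>z. z \<notin> D \<Longrightarrow> measure B1 {z} = 0 \<and> measure B2 {z} = 0"
  shows "\<mu> A \<le> 0"
proof (rule ccontr)
  assume "\<not> \<mu> A \<le> 0"
  then have "0 < \<mu> (A \<inter> \<Omega>)"
    using signed_meas_inter_\<Omega>[OF assms(2)] by simp
  moreover have "A \<inter> \<Omega> \<in> sets borel"
    using assms(2) open_\<Omega> by simp
  ultimately obtain K where "K \<subseteq> A \<inter> \<Omega>" "compact K" "0 < \<mu> K"
    using exists_compact_subset_signed_meas_pos by blast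
  with assms have "liminf energy = \<infinity>"
    by (intro liminf_energy_eq_top_if_diffuse[of K D]) auto
  with assms(1) show False
    by simp
qed

lemma signed_meas_eq_0_if_diffuse:
  assumes "liminf energy < \<infinity>" "A \<in> sets borel"
    and "countable D" "A \<inter> D = {}" "\<And>z. z \<notin> D \<Longrightarrow> measure B1 {z} = 0 \<and> measure B2 {z} = 0"
  shows "\<mu> A = 0"
proof -
  interpret swap: cube_energy B2 B1 \<Omega> \<theta> r \<epsilon>
    by unfold_locales (use sets_B1 sets_B2 null_B1 null_B2 open_\<Omega> bounded_\<Omega> \<theta>_pos \<theta>_less_1
        r_pos r_le_\<epsilon> \<epsilon>_tendsto_0 in auto)
  have "swap.energy = energy"
    by (simp add: fun_eq_iff swap.energy_def energy_def signed_meas_def abs_minus_commute)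
  then have "signed_meas B2 B1 A \<le> 0"
    using assms by (intro swap.signed_meas_nonpos_if_diffuse[of A D]) auto
  moreover have "\<mu> A \<le> 0"
    using assms by (rule signed_meas_nonpos_if_diffuse)
  ultimately show ?thesis
    by (simp add: signed_meas_def)
qed

definition atoms :: "'a set" where
  "atoms = {z \<in> \<Omega>. \<mu> {z} \<noteq> 0}"

lemma countable_atoms: "countable atoms"
  by (rule countable_subset[OF _ countable_Un[OF B1.countable_support B2.countable_support]])
     (auto simp: atoms_def signed_meas_def)

lemma has_sum_atoms:
  assumes "liminf energy < \<infinity>" "A \<in> sets borel" "A \<subseteq> \<Omega>"
  shows "((\<lambda>z. \<mu> {z}) has_sum \<mu> A) (atoms \<inter> A)"
proof -
  define D where "D = {z. measure B1 {z} \<noteq> 0} \<union> {z. measure B2 {z} \<noteq> 0}"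
  have "countable D"
    using B1.countable_support B2.countable_support by (simp add: D_def)
  moreover have D: "D \<in> sets borel"
    using \<open>countable D\<close> by (rule sets.countable[rotated]) simp
  ultimately have "countable (A \<inter> D)" "A \<inter> D \<in> sets borel" "A - D \<in> sets borel"
    using assms(2) by auto
  then have "((\<lambda>z. measure B1 {z}) has_sum measure B1 (A \<inter> D)) (A \<inter> D)"
    "((\<lambda>z. measure B2 {z}) has_sum measure B2 (A \<inter> D)) (A \<inter> D)"
    by (auto intro!: B1.has_sum_measure_singletons B2.has_sum_measure_singletons simp: sets_B1 sets_B2)
  from has_sum_add[OF this(1) has_sum_uminusI[OF this(2)]]
  have sum: "((\<lambda>z. \<mu> {z}) has_sum \<mu> (A \<inter> D)) (A \<inter> D)"
    by (simp add: signed_meas_def)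
  have "\<mu> (A - D) = 0"
    by (rule signed_meas_eq_0_if_diffuse[OF assms(1) \<open>A - D \<in> sets borel\<close> \<open>countable D\<close>])
      (auto simp: D_def)
  moreover have "measure B1 (A - D) = measure B1 A - measure B1 (A \<inter> D)"
    "measure B2 (A - D) = measure B2 A - measure B2 (A \<inter> D)"
    using assms(2) D by (simp_all add: B1.finite_measure_Diff' B2.finite_measure_Diff' sets_B1 sets_B2)
  ultimately have "\<mu> (A \<inter> D) = \<mu> A"
    by (simp add: signed_meas_def)
  with sum have "((\<lambda>z. \<mu> {z}) has_sum \<mu> A) (A \<inter> D)"
    by simp
  then show ?thesis
  proof (rule has_sum_cong_neutral[THEN iffD1, rotated 3])
    fix z assume "z \<in> atoms \<inter> A - A \<inter> D"
    then show "\<mu> {z} = 0"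
      by (simp add: D_def signed_meas_def)
  next
    fix z assume "z \<in> A \<inter> D - atoms \<inter> A"
    then show "\<mu> {z} = 0"
      using assms(3) by (auto simp: atoms_def)
  qed simp
qed

lemma nn_integral_atoms_le_liminf_energy:
  "(\<integral>\<^sup>+ z. ennreal (\<bar>\<mu> {z}\<bar> powr \<theta>) \<partial>count_space atoms) \<le> liminf energy"
proof (cases "liminf energy")
  case (real L)
  have bound: "(\<Sum>z\<in>F. \<bar>\<mu> {z}\<bar> powr \<theta>) \<le> L" if "finite F" "F \<subseteq> atoms" for F
    using sum_atoms_le_liminf_energy[OF that(1)] that(2) real
    by (auto simp: atoms_def ennreal_le_iff)
  then have "(\<lambda>z. \<bar>\<mu> {z}\<bar> powr \<theta>) summable_on atoms"
    by (intro nonneg_bdd_above_summable_on) (auto simp: bdd_above_def)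
  moreover from this have "infsum (\<lambda>z. \<bar>\<mu> {z}\<bar> powr \<theta>) atoms \<le> L"
    by (rule infsum_le_finite_sums) (use bound in auto)
  ultimately show ?thesis
    using real by (simp add: nn_integral_count_space_has_sum[OF has_sum_infsum] ennreal_leI)
qed simp

lemma summable_on_atoms:
  assumes "liminf energy < \<infinity>"
  shows "(\<lambda>z. \<mu> {z}) summable_on atoms"
proof -
  have "atoms \<inter> \<Omega> = atoms"
    by (auto simp: atoms_def)
  then show ?thesis
    using has_sum_atoms[OF assms _ order_refl] open_\<Omega> by (auto simp: summable_on_def)
qed

lemma energy_eq_if_signed_meas_eq:
  assumes "\<And>A. A \<in> sets borel \<Longrightarrow> A \<subseteq> \<Omega> \<Longrightarrow> \<nu> A = \<mu> A"
  shows "(\<integral>\<^sup>+ x \<in> inner_set \<Omega> (\<epsilon> k). ennreal (\<bar>\<nu> (cube x (r k))\<bar> powr \<theta> / r k ^ DIM('a)) \<partial>lborel) = energy k"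
  unfolding energy_def
proof (intro nn_integral_cong)
  fix x
  show "ennreal (\<bar>\<nu> (cube x (r k))\<bar> powr \<theta> / r k ^ DIM('a)) * indicator (inner_set \<Omega> (\<epsilon> k)) x
    = ennreal (\<bar>\<mu> (cube x (r k))\<bar> powr \<theta> / r k ^ DIM('a)) * indicator (inner_set \<Omega> (\<epsilon> k)) x"
    using assms[OF sets_cube cube_subset_inner_set[OF _ r_le_\<epsilon>]]
    by (cases "x \<in> inner_set \<Omega> (\<epsilon> k)") simp_all
qed

end

lemma distr_borel_of_restrict_space:
  fixes M :: "'a::topological_space measure"
  assumes "sets M = sets (restrict_space borel \<Omega>)" "finite_measure M" "\<Omega> \<in> sets borel"
  shows "sets (distr M borel (\<lambda>x. x)) = sets borel"
    and "finite_measure (distr M borel (\<lambda>x. x))"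
    and "emeasure (distr M borel (\<lambda>x. x)) (- \<Omega>) = 0"
    and "\<And>A. A \<in> sets borel \<Longrightarrow> measure (distr M borel (\<lambda>x. x)) A = measure M (A \<inter> \<Omega>)"
proof -
  have space: "space M = \<Omega>"
    using sets_eq_imp_space_eq[OF assms(1)] by (simp add: space_restrict_space)
  have "(\<lambda>x. x) \<in> measurable (restrict_space borel \<Omega>) borel"
    by (rule measurable_restrict_space1) simp
  then have id: "(\<lambda>x. x) \<in> measurable M borel"
    by (simp only: measurable_cong_sets[OF assms(1) refl])
  show "sets (distr M borel (\<lambda>x. x)) = sets borel"
    by simp
  show "finite_measure (distr M borel (\<lambda>x. x))"
    using assms(2) id by (rule finite_measure.finite_measure_distr)
  have "- \<Omega> \<in> sets borel"
    using sets.compl_sets[OF assms(3)] by (simp add: Compl_eq_Diff_UNIV)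
  with id show "emeasure (distr M borel (\<lambda>x. x)) (- \<Omega>) = 0"
    by (simp add: emeasure_distr space)
  show "measure (distr M borel (\<lambda>x. x)) A = measure M (A \<inter> \<Omega>)" if "A \<in> sets borel" for A
    using id that by (simp add: measure_distr space)
qed

lemma cube_energy_distr:
  fixes M1 M2 :: "'a::euclidean_space measure"
  assumes "open \<Omega>" "bounded \<Omega>"
    and "sets M1 = sets (restrict_space borel \<Omega>)" "finite_measure M1"
    and "sets M2 = sets (restrict_space borel \<Omega>)" "finite_measure M2"
    and "0 < \<theta>" "\<theta> < 1" "\<And>k. 0 < r k" "\<And>k. sqrt DIM('a) * r k \<le> \<epsilon> k" "\<epsilon> \<longlonglongrightarrow> 0"
  shows "cube_energy (distr M1 borel (\<lambda>x. x)) (distr M2 borel (\<lambda>x. x)) \<Omega> \<theta> r \<epsilon>"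
proof -
  have "\<Omega> \<in> sets borel"
    using assms(1) by simp
  with assms show ?thesis
    using distr_borel_of_restrict_space(1-3)[OF assms(3,4)] distr_borel_of_restrict_space(1-3)[OF assms(5,6)]
    by (intro cube_energy.intro finite_borel_pair.intro cube_energy_axioms.intro
        finite_borel_pair_axioms.intro) auto
qed

theorem lemma2p3:
  fixes \<Omega> :: "'a::euclidean_space set"
    and M1 M2 :: "'a measure"
    and \<theta> :: real
    and r \<epsilon> :: "nat \<Rightarrow> real"
  assumes "open \<Omega>" and "bounded \<Omega>"
    and "sets M1 = sets (restrict_space borel \<Omega>)" and "finite_measure M1"
    and "sets M2 = sets (restrict_space borel \<Omega>)" and "finite_measure M2"
    and "0 < \<theta>" and "\<theta> < 1"
    and "\<And>k. 0 < sqrt (real DIM('a)) * r k"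
    and "\<And>k. sqrt (real DIM('a)) * r k \<le> \<epsilon> k"
    and "decseq \<epsilon>" and "\<epsilon> \<longlonglongrightarrow> 0"
    and "liminf (\<lambda>k. \<integral>\<^sup>+ x \<in> inner_set \<Omega> (\<epsilon> k).
           ennreal (\<bar>signed_meas M1 M2 (cube x (r k))\<bar> powr \<theta> / r k ^ DIM('a)) \<partial>lborel) < \<infinity>"
  shows "\<exists>S m. countable S \<and> S \<subseteq> \<Omega> \<and> (\<forall>x\<in>S. m x \<noteq> (0::real))
           \<and> m summable_on S
           \<and> (\<forall>A \<in> sets (restrict_space borel \<Omega>). signed_meas M1 M2 A = infsum m (S \<inter> A))
           \<and> (\<integral>\<^sup>+ x. ennreal (\<bar>m x\<bar> powr \<theta>) \<partial>count_space S)
               \<le> liminf (\<lambda>k. \<integral>\<^sup>+ x \<in> inner_set \<Omega> (\<epsilon> k).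
                  ennreal (\<bar>signed_meas M1 M2 (cube x (r k))\<bar> powr \<theta> / r k ^ DIM('a)) \<partial>lborel)"
proof -
  let ?B1 = "distr M1 borel (\<lambda>x. x)" and ?B2 = "distr M2 borel (\<lambda>x. x)"
  have \<Omega>: "\<Omega> \<in> sets borel"
    using assms(1) by simp
  have "0 < r k" for k
    using assms(9)[of k] by (simp add: zero_less_mult_iff)
  then interpret cube_energy ?B1 ?B2 \<Omega> \<theta> r \<epsilon>
    using assms(1-8,10,12) by (intro cube_energy_distr)
  have \<mu>_eq: "signed_meas M1 M2 A = \<mu> A" if "A \<in> sets borel" "A \<subseteq> \<Omega>" for A
    using that distr_borel_of_restrict_space(4)[OF assms(3,4) \<Omega>] distr_borel_of_restrict_space(4)[OF assms(5,6) \<Omega>]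
    by (simp add: signed_meas_def Int_absorb2)
  then have energy: "liminf (\<lambda>k. \<integral>\<^sup>+ x \<in> inner_set \<Omega> (\<epsilon> k).
      ennreal (\<bar>signed_meas M1 M2 (cube x (r k))\<bar> powr \<theta> / r k ^ DIM('a)) \<partial>lborel) = liminf energy"
    by (simp add: energy_eq_if_signed_meas_eq)
  show ?thesis
  proof (intro exI[of _ atoms] exI[of _ "\<lambda>z. \<mu> {z}"] conjI ballI)
    show "countable atoms" "atoms \<subseteq> \<Omega>" "\<And>z. z \<in> atoms \<Longrightarrow> \<mu> {z} \<noteq> 0"
      using countable_atoms by (auto simp: atoms_def)
    show "(\<lambda>z. \<mu> {z}) summable_on atoms"
      using summable_on_atoms assms(13) energy by simp
    show "signed_meas M1 M2 A = infsum (\<lambda>z. \<mu> {z}) (atoms \<inter> A)" if "A \<in> sets (restrict_space borel \<Omega>)" for A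
      using has_sum_atoms[of A] assms(13) energy \<mu>_eq that \<Omega> by (simp add: infsumI sets_restrict_space_iff)
  qed (simp add: energy nn_integral_atoms_le_liminf_energy)
qed

end
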